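(* In the toroidal setting below, if $(\lambda_1,\lambda_2)$ is an interior simple zero of $P$, then the map $\hat\phi$ is bounded.
   Context: Toroidal setting: ${\mathcal G}$ is a bipartite graph embedded on a torus with disk faces, admitting dimer covers, nondegenerate, with positive edge weights; $l_1,l_2$ dual cycles generating $H_1$ with $l_1\wedge l_2=+1$; $K(\lambda_1,\lambda_2)$ a real Kasteleyn matrix with entries of edges crossing $l_i$ multiplied by $\lambda_i^{\pm1}$ according to the side of the white vertex; $P=\det K(\lambda_1,\lambda_2)$. An interior simple zero is a simple zero of $P$ with $\lambda_1,\lambda_2$ not both real; there $\ker K$ and $\ker K^t$ are one-dimensional. $\tilde{\mathcal G}$ is the lift to the universal cover with deck translations $p_1,p_2$, $\tilde K$ the lift of $K(1,1)$, $\tilde{\mathcal G}^*$ its dual. $F\in\ker K(\lambda_1,\lambda_2)$, $G\in\ker K(\lambda_1,\lambda_2)^t$ are extended by $F(b+p_j)=\lambda_jF(b)$, $G(w+p_j)=\lambda_j^{-1}G(w)$. $\hat\omega(wb)=\overline{G(w)}\tilde K_{wb}F(b)$ and $\hat\phi$ on vertices of $\tilde{\mathcal G}^*$ is defined up to an additive constant by $\hat\phi(f_1)-\hat\phi(f_2)=\hat\omega(wb)$, $f_1$/$f_2$ the faces to the left/right of the edge oriented from $w$ to $b$. *)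

theory Defs
  imports "HOL-Analysis.Complex_Analysis_Basics" "Jordan_Normal_Form.Determinant"
begin

(* White vertices: 0..<n, black vertices: 0..<n (separate index sets).
   Edges: elements of E :: 'e set; wv e / bv e are the white / black endpoints.
   cwW e / cwB e : the edge following e in clockwise order around its white /
   black endpoint (rotation system; this fixes the orientation of the surface).
   Darts: (e, True) = e oriented white->black, (e, False) = black->white.
   The face to the left of a dart is the orbit of that dart under face_next. *)

type_synonym pt = "int \<times> int"

definition padd :: "pt \<Rightarrow> pt \<Rightarrow> pt" where
  "padd x y = (fst x + fst y, snd x + snd y)"

definition psub :: "pt \<Rightarrow> pt \<Rightarrow> pt" where
  "psub x y = (fst x - fst y, snd x - snd y)"

definition face_next :: "('e \<Rightarrow> 'e) \<Rightarrow> ('e \<Rightarrow> 'e) \<Rightarrow> 'e \<times> bool \<Rightarrow> 'e \<times> bool" where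
  "face_next cwW cwB d = (if snd d then (cwB (fst d), False) else (cwW (fst d), True))"

definition orbit_of :: "('a \<Rightarrow> 'a) \<Rightarrow> 'a \<Rightarrow> 'a set" where
  "orbit_of f d = {(f ^^ k) d | k. True}"

definition faces :: "'e set \<Rightarrow> ('e \<Rightarrow> 'e) \<Rightarrow> ('e \<Rightarrow> 'e) \<Rightarrow> ('e \<times> bool) set set" where
  "faces E cwW cwB = orbit_of (face_next cwW cwB) ` (E \<times> UNIV)"

(* lifted darts: (dart, position of the tail vertex in Z^2);
   lifted edge (e,x) joins white (wv e, x) to black (bv e, x + s e) *)
definition lift_face_next ::
  "('e \<Rightarrow> 'e) \<Rightarrow> ('e \<Rightarrow> 'e) \<Rightarrow> ('e \<Rightarrow> pt) \<Rightarrow> ('e \<times> bool) \<times> pt \<Rightarrow> ('e \<times> bool) \<times> pt" where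
  "lift_face_next cwW cwB s ld =
     (let e = fst (fst ld); x = snd ld in
      if snd (fst ld) then ((cwB e, False), padd x (s e)) else ((cwW e, True), psub x (s e)))"

definition rotation_system ::
  "nat \<Rightarrow> 'e set \<Rightarrow> ('e \<Rightarrow> nat) \<Rightarrow> ('e \<Rightarrow> nat) \<Rightarrow> ('e \<Rightarrow> 'e) \<Rightarrow> ('e \<Rightarrow> 'e) \<Rightarrow> bool" where
  "rotation_system n E wv bv cwW cwB \<longleftrightarrow>
     (\<forall>e\<in>E. wv e < n \<and> bv e < n) \<and>
     bij_betw cwW E E \<and> bij_betw cwB E E \<and>
     (\<forall>e\<in>E. wv (cwW e) = wv e \<and> bv (cwB e) = bv e) \<and>
     (\<forall>e\<in>E. \<forall>e'\<in>E. wv e = wv e' \<longrightarrow> (\<exists>k. (cwW ^^ k) e = e')) \<and>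
     (\<forall>e\<in>E. \<forall>e'\<in>E. bv e = bv e' \<longrightarrow> (\<exists>k. (cwB ^^ k) e = e'))"

(* adjacency in the lift; vertices ((True,w),x) white, ((False,b),x) black *)
definition lift_adj ::
  "'e set \<Rightarrow> ('e \<Rightarrow> nat) \<Rightarrow> ('e \<Rightarrow> nat) \<Rightarrow> ('e \<Rightarrow> pt) \<Rightarrow> (bool \<times> nat) \<times> pt \<Rightarrow> (bool \<times> nat) \<times> pt \<Rightarrow> bool" where
  "lift_adj E wv bv s u v \<longleftrightarrow>
     (\<exists>e\<in>E. \<exists>x. (u = ((True, wv e), x) \<and> v = ((False, bv e), padd x (s e))) \<or>
                (v = ((True, wv e), x) \<and> u = ((False, bv e), padd x (s e))))"

(* G is a bipartite graph cellularly embedded in the torus (connected rotation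
   system with Euler characteristic 0), s e = (signed crossings of e with l1,
   signed crossings of e with l2) in {-1,0,1}^2, the lift along s has closed
   faces and is connected, i.e. it is the lift to the universal cover with
   deck translations p1=(1,0), p2=(0,1). *)
definition toroidal_graph ::
  "nat \<Rightarrow> 'e set \<Rightarrow> ('e \<Rightarrow> nat) \<Rightarrow> ('e \<Rightarrow> nat) \<Rightarrow> ('e \<Rightarrow> 'e) \<Rightarrow> ('e \<Rightarrow> 'e) \<Rightarrow> ('e \<Rightarrow> pt) \<Rightarrow> bool" where
  "toroidal_graph n E wv bv cwW cwB s \<longleftrightarrow>
     finite E \<and> rotation_system n E wv bv cwW cwB \<and>
     int (2 * n) - int (card E) + int (card (faces E cwW cwB)) = 0 \<and>
     (\<forall>e\<in>E. fst (s e) \<in> {-1, 0, 1} \<and> snd (s e) \<in> {-1, 0, 1}) \<and>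
     (\<forall>d \<in> E \<times> UNIV. \<exists>k>0. (lift_face_next cwW cwB s ^^ k) (d, (0, 0)) = (d, (0, 0))) \<and>
     (\<forall>c c' i j x y. i < n \<longrightarrow> j < n \<longrightarrow> (lift_adj E wv bv s)\<^sup>*\<^sup>* ((c, i), x) ((c', j), y))"

definition dimer_cover :: "nat \<Rightarrow> 'e set \<Rightarrow> ('e \<Rightarrow> nat) \<Rightarrow> ('e \<Rightarrow> nat) \<Rightarrow> 'e set \<Rightarrow> bool" where
  "dimer_cover n E wv bv M \<longleftrightarrow> M \<subseteq> E \<and>
     (\<forall>w<n. \<exists>!e. e \<in> M \<and> wv e = w) \<and> (\<forall>b<n. \<exists>!e. e \<in> M \<and> bv e = b)"

definition nondegenerate :: "nat \<Rightarrow> 'e set \<Rightarrow> ('e \<Rightarrow> nat) \<Rightarrow> ('e \<Rightarrow> nat) \<Rightarrow> bool" where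
  "nondegenerate n E wv bv \<longleftrightarrow> (\<forall>e\<in>E. \<exists>M. dimer_cover n E wv bv M \<and> e \<in> M)"

(* real Kasteleyn weighting K e = +- nu e with nu e > 0, and Kasteleyn sign
   condition: around every face of degree 2k the product of signs is (-1)^(k+1) *)
definition real_kasteleyn :: "'e set \<Rightarrow> ('e \<Rightarrow> 'e) \<Rightarrow> ('e \<Rightarrow> 'e) \<Rightarrow> ('e \<Rightarrow> real) \<Rightarrow> ('e \<Rightarrow> real) \<Rightarrow> bool" where
  "real_kasteleyn E cwW cwB \<nu> K \<longleftrightarrow>
     (\<forall>e\<in>E. \<nu> e > 0 \<and> (K e = \<nu> e \<or> K e = - \<nu> e)) \<and>
     (\<forall>f\<in>faces E cwW cwB. (\<Prod>d\<in>f. sgn (K (fst d))) = (-1) ^ (card f div 2 + 1))"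

definition Kmat :: "nat \<Rightarrow> 'e set \<Rightarrow> ('e \<Rightarrow> nat) \<Rightarrow> ('e \<Rightarrow> nat) \<Rightarrow> ('e \<Rightarrow> pt) \<Rightarrow> ('e \<Rightarrow> real)
                    \<Rightarrow> complex \<Rightarrow> complex \<Rightarrow> complex mat" where
  "Kmat n E wv bv s K l1 l2 = mat n n (\<lambda>(w, b).
      \<Sum>e\<in>{e\<in>E. wv e = w \<and> bv e = b}. complex_of_real (K e) * l1 powi fst (s e) * l2 powi snd (s e))"

definition interior_simple_zero :: "(complex \<Rightarrow> complex \<Rightarrow> complex) \<Rightarrow> complex \<Rightarrow> complex \<Rightarrow> bool" where
  "interior_simple_zero P l1 l2 \<longleftrightarrow> l1 \<noteq> 0 \<and> l2 \<noteq> 0 \<and> \<not> (l1 \<in> \<real> \<and> l2 \<in> \<real>) \<and>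
     P l1 l2 = 0 \<and> (deriv (\<lambda>z. P z l2) l1 \<noteq> 0 \<or> deriv (\<lambda>z. P l1 z) l2 \<noteq> 0)"

(* omega-hat on the lifted edge (e,x), from (wv e, x) to (bv e, x + s e) *)
definition omega_hat :: "('e \<Rightarrow> nat) \<Rightarrow> ('e \<Rightarrow> nat) \<Rightarrow> ('e \<Rightarrow> pt) \<Rightarrow> ('e \<Rightarrow> real) \<Rightarrow> complex \<Rightarrow> complex
                        \<Rightarrow> (nat \<Rightarrow> complex) \<Rightarrow> (nat \<Rightarrow> complex) \<Rightarrow> 'e \<Rightarrow> pt \<Rightarrow> complex" where
  "omega_hat wv bv s K l1 l2 F G e x =
     (let y = padd x (s e) in
      cnj (l1 powi (- fst x) * l2 powi (- snd x) * G (wv e)) * complex_of_real (K e)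
      * (l1 powi fst y * l2 powi snd y * F (bv e)))"

end

theory Submission
  imports Defs
begin

text \<open>
  Translating \<open>\<hat>\<omega>\<close> by a deck transformation \<open>p\<^sub>j\<close> multiplies it by
  \<open>\<mu>\<^sub>j = \<lambda>\<^sub>j / cnj \<lambda>\<^sub>j\<close>, a number of modulus one. Since the lift is connected and
  \<open>\<hat>\<phi>\<close> is determined by its increments up to a constant, \<open>\<hat>\<phi> \<circ> p\<^sub>j = \<mu>\<^sub>j \<hat>\<phi> + c\<^sub>j\<close>.
  These two affine maps commute and, as \<open>\<lambda>\<^sub>1, \<lambda>\<^sub>2\<close> are not both real, are not both
  translations, so they have a common fixed point \<open>z\<close>. Then \<open>|\<hat>\<phi> - z|\<close> is
  invariant under both deck transformations and takes only finitely many values.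
  The hypotheses on dimer covers, Kasteleyn signs and the kernel vectors \<open>F\<close>, \<open>G\<close>
  serve in the paper to make \<open>\<hat>\<phi>\<close> well defined.
\<close>

lemma padd_psub [simp]: "padd (psub x y) y = x"
  and psub_padd [simp]: "psub (padd x y) y = x"
  by (simp_all add: padd_def psub_def)

lemma padd_commute_right: "padd (padd x p) q = padd (padd x q) p"
  by (simp add: padd_def)

lemma lift_face_next_padd:
  "lift_face_next cwW cwB s (d, padd x p)
     = (fst (lift_face_next cwW cwB s (d, x)), padd (snd (lift_face_next cwW cwB s (d, x))) p)"
  by (auto simp: lift_face_next_def padd_def psub_def Let_def)

lemma funpow_in_bij_betw: "bij_betw f E E \<Longrightarrow> e \<in> E \<Longrightarrow> (f ^^ k) e \<in> E"
  by (induction k) (auto dest: bij_betwE)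

definition lift_tail :: "('e \<Rightarrow> nat) \<Rightarrow> ('e \<Rightarrow> nat) \<Rightarrow> ('e \<times> bool) \<times> pt \<Rightarrow> (bool \<times> nat) \<times> pt" where
  "lift_tail wv bv a =
     (let e = fst (fst a) in ((snd (fst a), if snd (fst a) then wv e else bv e), snd a))"

lemma rotation_system_if_toroidal_graph:
  "toroidal_graph n E wv bv cwW cwB s \<Longrightarrow> rotation_system n E wv bv cwW cwB"
  by (simp add: toroidal_graph_def)

context
  fixes n :: nat and E :: "'e set" and wv bv :: "'e \<Rightarrow> nat" and cwW cwB :: "'e \<Rightarrow> 'e"
    and s :: "'e \<Rightarrow> pt" and \<psi> :: "('e \<times> bool) \<times> pt \<Rightarrow> 'b"
  assumes graph: "toroidal_graph n E wv bv cwW cwB s"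
    and face_inv: "\<forall>d\<in>E \<times> UNIV. \<forall>x. \<psi> (lift_face_next cwW cwB s (d, x)) = \<psi> (d, x)"
    and edge_inv: "\<forall>e\<in>E. \<forall>x. \<psi> ((e, True), x) = \<psi> ((e, False), padd x (s e))"
begin

lemma lift_invariant_funpow_cwW: "e \<in> E \<Longrightarrow> \<psi> (((cwW ^^ k) e, True), x) = \<psi> ((e, True), x)"
proof (induction k)
  case (Suc k)
  let ?e = "(cwW ^^ k) e"
  have "?e \<in> E"
    using funpow_in_bij_betw rotation_system_if_toroidal_graph[OF graph] Suc.prems
    by (auto simp: rotation_system_def)
  moreover have "lift_face_next cwW cwB s ((?e, False), padd x (s ?e)) = ((cwW ?e, True), x)"
    by (simp add: lift_face_next_def)
  ultimately show ?case using face_inv edge_inv Suc by (metis SigmaI UNIV_I funpow.simps(2) o_apply)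
qed simp

lemma lift_invariant_funpow_cwB: "e \<in> E \<Longrightarrow> \<psi> (((cwB ^^ k) e, False), x) = \<psi> ((e, False), x)"
proof (induction k)
  case (Suc k)
  let ?e = "(cwB ^^ k) e"
  have "?e \<in> E"
    using funpow_in_bij_betw rotation_system_if_toroidal_graph[OF graph] Suc.prems
    by (auto simp: rotation_system_def)
  moreover have "lift_face_next cwW cwB s ((?e, True), psub x (s ?e)) = ((cwB ?e, False), x)"
    by (simp add: lift_face_next_def)
  ultimately show ?case using face_inv edge_inv Suc by (metis SigmaI UNIV_I funpow.simps(2) o_apply padd_psub)
qed simp

lemma lift_invariant_eq_if_same_tail:
  assumes "lift_tail wv bv a = lift_tail wv bv b" "fst (fst a) \<in> E" "fst (fst b) \<in> E"
  shows "\<psi> a = \<psi> b"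
proof -
  obtain e c x e' c' x' where a: "a = ((e, c), x)" and b: "b = ((e', c'), x')"
    by (metis prod.collapse)
  have eE: "e \<in> E" "e' \<in> E" and same: "c' = c" "x' = x"
    using assms a b by (auto simp: lift_tail_def Let_def)
  have orbits: "\<forall>e\<in>E. \<forall>e'\<in>E. wv e = wv e' \<longrightarrow> (\<exists>k. (cwW ^^ k) e = e')"
    "\<forall>e\<in>E. \<forall>e'\<in>E. bv e = bv e' \<longrightarrow> (\<exists>k. (cwB ^^ k) e = e')"
    using rotation_system_if_toroidal_graph[OF graph] by (simp_all add: rotation_system_def)
  show ?thesis
  proof (cases c)
    case True
    then have "wv e = wv e'" using assms(1) a b by (simp add: lift_tail_def)
    then obtain k where "(cwW ^^ k) e = e'" using orbits(1) eE by blast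
    then show ?thesis using lift_invariant_funpow_cwW[OF eE(1), of k x] a b same True by simp
  next
    case False
    then have "bv e = bv e'" using assms(1) a b by (simp add: lift_tail_def)
    then obtain k where "(cwB ^^ k) e = e'" using orbits(2) eE by blast
    then show ?thesis using lift_invariant_funpow_cwB[OF eE(1), of k x] a b same False by simp
  qed
qed

lemma lift_invariant_across_lift_adj:
  assumes "lift_adj E wv bv s u v"
  obtains a b where "lift_tail wv bv a = u" "lift_tail wv bv b = v"
    "fst (fst a) \<in> E" "fst (fst b) \<in> E" "\<psi> a = \<psi> b"
proof -
  obtain e x where "e \<in> E" and
    "(u = ((True, wv e), x) \<and> v = ((False, bv e), padd x (s e))) \<or>
     (v = ((True, wv e), x) \<and> u = ((False, bv e), padd x (s e)))"
    using assms unfolding lift_adj_def by blast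
  then show ?thesis
    using that[of "((e, True), x)" "((e, False), padd x (s e))"]
      that[of "((e, False), padd x (s e))" "((e, True), x)"] edge_inv
    by (auto simp: lift_tail_def)
qed

lemma lift_invariant_along_path:
  assumes "(lift_adj E wv bv s)\<^sup>*\<^sup>* u v"
    and "lift_tail wv bv a = u" "fst (fst a) \<in> E" "lift_tail wv bv b = v" "fst (fst b) \<in> E"
  shows "\<psi> a = \<psi> b"
  using assms(1,4,5)
proof (induction v arbitrary: b rule: rtranclp_induct)
  case base
  then show ?case using assms(2,3) lift_invariant_eq_if_same_tail by metis
next
  case (step v w)
  obtain a' b' where "lift_tail wv bv a' = v" "lift_tail wv bv b' = w"
    "fst (fst a') \<in> E" "fst (fst b') \<in> E" "\<psi> a' = \<psi> b'"
    using lift_invariant_across_lift_adj[OF step.hyps(2)] by blast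
  then show ?case using step.IH lift_invariant_eq_if_same_tail step.prems by metis
qed

lemma lift_invariant_const:
  assumes "fst (fst a) \<in> E" "fst (fst b) \<in> E"
  shows "\<psi> a = \<psi> b"
proof (rule lift_invariant_along_path)
  have connected: "\<And>c c' i j x y. i < n \<Longrightarrow> j < n \<Longrightarrow> (lift_adj E wv bv s)\<^sup>*\<^sup>* ((c, i), x) ((c', j), y)"
    using graph unfolding toroidal_graph_def by blast
  have "\<forall>e\<in>E. wv e < n \<and> bv e < n"
    using rotation_system_if_toroidal_graph[OF graph] by (simp add: rotation_system_def)
  then show "(lift_adj E wv bv s)\<^sup>*\<^sup>* (lift_tail wv bv a) (lift_tail wv bv b)"
    using assms by (auto simp: lift_tail_def Let_def intro!: connected)
qed (use assms in auto)

end

text \<open>\<open>\<phi> (d, x + p) - \<mu> * \<phi> (d, x)\<close> is again face invariant and its edge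
  increments vanish, so it is constant.\<close>

lemma face_function_padd_affine:
  fixes \<phi> :: "('e \<times> bool) \<times> pt \<Rightarrow> 'a::comm_ring"
  assumes graph: "toroidal_graph n E wv bv cwW cwB s"
    and face_inv: "\<forall>d\<in>E \<times> UNIV. \<forall>x. \<phi> (lift_face_next cwW cwB s (d, x)) = \<phi> (d, x)"
    and edge_diff: "\<forall>e\<in>E. \<forall>x. \<phi> ((e, True), x) - \<phi> ((e, False), padd x (s e)) = \<omega> e x"
    and \<omega>_padd: "\<forall>e x. \<omega> e (padd x p) = \<mu> * \<omega> e x"
  shows "\<exists>c. \<forall>d\<in>E \<times> UNIV. \<forall>x. \<phi> (d, padd x p) = \<mu> * \<phi> (d, x) + c"
proof (cases "E = {}")
  case False
  then obtain e0 where e0: "e0 \<in> E" by blast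
  define \<psi> where "\<psi> a = \<phi> (fst a, padd (snd a) p) - \<mu> * \<phi> a" for a
  have face_inv_\<psi>: "\<psi> (lift_face_next cwW cwB s (d, x)) = \<psi> (d, x)" if "d \<in> E \<times> UNIV" for d x
  proof -
    have "\<phi> (lift_face_next cwW cwB s (d, padd x p)) = \<phi> (d, padd x p)"
      and "\<phi> (lift_face_next cwW cwB s (d, x)) = \<phi> (d, x)"
      using face_inv that by blast+
    then show ?thesis unfolding \<psi>_def lift_face_next_padd[of cwW cwB s d x p] by simp
  qed
  have edge_inv_\<psi>: "\<psi> ((e, True), x) = \<psi> ((e, False), padd x (s e))" if "e \<in> E" for e x
  proof -
    have "\<phi> ((e, True), padd x p) - \<phi> ((e, False), padd (padd x p) (s e)) = \<mu> * \<omega> e x"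
      and "\<phi> ((e, True), x) - \<phi> ((e, False), padd x (s e)) = \<omega> e x"
      using edge_diff[rule_format, OF that] \<omega>_padd[rule_format, of e x] by simp_all
    then show ?thesis unfolding \<psi>_def by (simp add: padd_commute_right algebra_simps)
  qed
  define c where "c = \<psi> ((e0, True), (0, 0))"
  have \<psi>_const: "\<psi> (d, x) = c" if "d \<in> E \<times> UNIV" for d x
    unfolding c_def by (rule lift_invariant_const[OF graph]) (use face_inv_\<psi> edge_inv_\<psi> e0 that in auto)
  have "\<phi> (d, padd x p) = \<mu> * \<phi> (d, x) + c" if "d \<in> E \<times> UNIV" for d x
    using \<psi>_const[OF that, of x] by (simp add: \<psi>_def algebra_simps)
  then show ?thesis by blast
qed simp

lemma omega_hat_padd:
  assumes "l1 \<noteq> 0" "l2 \<noteq> 0"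
  shows "omega_hat wv bv s K l1 l2 F G e (padd x p)
           = (l1 / cnj l1) powi fst p * (l2 / cnj l2) powi snd p * omega_hat wv bv s K l1 l2 F G e x"
proof -
  have "cnj l1 \<noteq> 0" "cnj l2 \<noteq> 0" using assms by auto
  then show ?thesis
    using assms by (simp add: omega_hat_def padd_def power_int_add power_int_diff power_int_minus
        power_int_divide_distrib field_simps)
qed

lemma int_shift_invariant_const:
  assumes "\<And>i :: int. h (i + 1) = h i"
  shows "h i = h 0"
proof (induction i rule: int_induct[where k = 0])
  case (step1 i)
  then show ?case by (simp add: assms)
next
  case (step2 i)
  then show ?case using assms[of "i - 1"] by simp
qed simp

lemma pt_shift_invariant_const:
  assumes "\<And>x. h (padd x (1, 0)) = h x" and "\<And>x. h (padd x (0, 1)) = h x"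
  shows "h x = h (0, 0)"
proof -
  obtain i j where x: "x = (i, j)" by fastforce
  have "h (i, j) = h (0, j)"
    by (rule int_shift_invariant_const[of "\<lambda>i. h (i, j)"]) (metis assms(1) padd_def add_0_right fst_conv snd_conv)
  also have "\<dots> = h (0, 0)"
    by (rule int_shift_invariant_const[of "\<lambda>j. h (0, j)"]) (metis assms(2) padd_def add_0_right fst_conv snd_conv)
  finally show ?thesis using x by simp
qed

lemma norm_const_if_unimodular_shifts:
  fixes f :: "pt \<Rightarrow> 'a::real_normed_div_algebra"
  assumes "\<And>x. f (padd x (1, 0)) = \<mu>1 * f x" and "\<And>x. f (padd x (0, 1)) = \<mu>2 * f x"
    and "norm \<mu>1 = 1" and "norm \<mu>2 = 1"
  shows "norm (f x) = norm (f (0, 0))"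
  by (rule pt_shift_invariant_const) (simp_all add: assms norm_mult)

lemma commuting_affine_maps_common_fixed_point:
  fixes \<mu>1 \<mu>2 c1 c2 :: "'a::field"
  assumes "\<mu>1 * c2 + c1 = \<mu>2 * c1 + c2" and "\<mu>1 \<noteq> 1 \<or> \<mu>2 \<noteq> 1"
  shows "\<exists>z. \<mu>1 * z + c1 = z \<and> \<mu>2 * z + c2 = z"
  using assms(2)
proof
  assume "\<mu>1 \<noteq> 1"
  then have "\<mu>2 * (c1 / (1 - \<mu>1)) + c2 = c1 / (1 - \<mu>1)"
    using assms(1) by (simp add: field_simps)
  then show ?thesis using \<open>\<mu>1 \<noteq> 1\<close> by (intro exI[of _ "c1 / (1 - \<mu>1)"]) (simp add: field_simps)
next
  assume "\<mu>2 \<noteq> 1"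
  then have "\<mu>1 * (c2 / (1 - \<mu>2)) + c1 = c2 / (1 - \<mu>2)"
    using assms(1) by (simp add: field_simps)
  then show ?thesis using \<open>\<mu>2 \<noteq> 1\<close> by (intro exI[of _ "c2 / (1 - \<mu>2)"]) (simp add: field_simps)
qed
lemma bounded_if_affine_unimodular_shifts:
  fixes f :: "'d \<Rightarrow> pt \<Rightarrow> 'a::real_normed_field"
  assumes "finite D"
    and shift1: "\<forall>d\<in>D. \<forall>x. f d (padd x (1, 0)) = \<mu>1 * f d x + c1"
    and shift2: "\<forall>d\<in>D. \<forall>x. f d (padd x (0, 1)) = \<mu>2 * f d x + c2"
    and unimodular: "norm \<mu>1 = 1" "norm \<mu>2 = 1"
    and "\<mu>1 \<noteq> 1 \<or> \<mu>2 \<noteq> 1"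
  shows "\<exists>M. \<forall>d\<in>D. \<forall>x. norm (f d x) \<le> M"
proof (cases "D = {}")
  case False
  then obtain d0 where d0: "d0 \<in> D" by blast
  have "f d0 (padd (padd (0, 0) (1, 0)) (0, 1)) = \<mu>2 * (\<mu>1 * f d0 (0, 0) + c1) + c2"
    and "f d0 (padd (padd (0, 0) (0, 1)) (1, 0)) = \<mu>1 * (\<mu>2 * f d0 (0, 0) + c2) + c1"
    using shift1[rule_format, OF d0] shift2[rule_format, OF d0] by simp_all
  then have "\<mu>1 * c2 + c1 = \<mu>2 * c1 + c2"
    by (simp add: padd_commute_right[of "(0, 0)" "(1, 0)"] algebra_simps)
  then obtain z where "\<mu>1 * z + c1 = z" "\<mu>2 * z + c2 = z"
    using commuting_affine_maps_common_fixed_point assms(6) by blast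
  then have c: "c1 = z - \<mu>1 * z" "c2 = z - \<mu>2 * z" by (simp_all add: eq_diff_eq add.commute)
  have "norm (f d x) \<le> (\<Sum>d'\<in>D. norm (f d' (0, 0) - z)) + norm z" if d: "d \<in> D" for d x
  proof -
    have "norm (f d x - z) = norm (f d (0, 0) - z)"
      using shift1[rule_format, OF d] shift2[rule_format, OF d] c
      by (intro norm_const_if_unimodular_shifts[OF _ _ unimodular]) (simp_all add: algebra_simps)
    then show ?thesis
      using norm_triangle_sub[of "f d x" z] member_le_sum[OF d, of "\<lambda>d'. norm (f d' (0, 0) - z)"] assms(1)
      by simp
  qed
  then show ?thesis by blast
qed simp

theorem mainTheorem7:
  fixes n :: nat and E :: "'e set" and wv bv :: "'e \<Rightarrow> nat" and cwW cwB :: "'e \<Rightarrow> 'e"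
    and s :: "'e \<Rightarrow> int \<times> int" and \<nu> K :: "'e \<Rightarrow> real" and l1 l2 :: complex
    and F G :: "nat \<Rightarrow> complex" and \<phi> :: "('e \<times> bool) \<times> (int \<times> int) \<Rightarrow> complex"
  assumes "toroidal_graph n E wv bv cwW cwB s"
    and "\<exists>M. dimer_cover n E wv bv M"
    and "nondegenerate n E wv bv"
    and "real_kasteleyn E cwW cwB \<nu> K"
    and "interior_simple_zero (\<lambda>a b. det (Kmat n E wv bv s K a b)) l1 l2"
    and "\<forall>w<n. (\<Sum>b<n. Kmat n E wv bv s K l1 l2 $$ (w, b) * F b) = 0"
    and "\<forall>b<n. (\<Sum>w<n. Kmat n E wv bv s K l1 l2 $$ (w, b) * G w) = 0"
    and "\<forall>d\<in>E \<times> UNIV. \<forall>x. \<phi> (lift_face_next cwW cwB s (d, x)) = \<phi> (d, x)"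
    and "\<forall>e\<in>E. \<forall>x. \<phi> ((e, True), x) - \<phi> ((e, False), padd x (s e))
                     = omega_hat wv bv s K l1 l2 F G e x"
  shows "\<exists>M. \<forall>d\<in>E \<times> UNIV. \<forall>x. cmod (\<phi> (d, x)) \<le> M"
proof -
  have l0: "l1 \<noteq> 0" "l2 \<noteq> 0" and not_real: "\<not> (l1 \<in> \<real> \<and> l2 \<in> \<real>)"
    using assms(5) unfolding interior_simple_zero_def by blast+
  define \<mu>1 \<mu>2 where "\<mu>1 = l1 / cnj l1" and "\<mu>2 = l2 / cnj l2"
  have "\<exists>c. \<forall>d\<in>E \<times> UNIV. \<forall>x. \<phi> (d, padd x (1, 0)) = \<mu>1 * \<phi> (d, x) + c"
    by (rule face_function_padd_affine[OF assms(1,8,9)]) (simp add: omega_hat_padd[OF l0] \<mu>1_def)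
  moreover have "\<exists>c. \<forall>d\<in>E \<times> UNIV. \<forall>x. \<phi> (d, padd x (0, 1)) = \<mu>2 * \<phi> (d, x) + c"
    by (rule face_function_padd_affine[OF assms(1,8,9)]) (simp add: omega_hat_padd[OF l0] \<mu>2_def)
  moreover have "finite (E \<times> (UNIV :: bool set))"
    using assms(1) by (simp add: toroidal_graph_def)
  moreover have "cmod \<mu>1 = 1" "cmod \<mu>2 = 1"
    using l0 by (simp_all add: \<mu>1_def \<mu>2_def norm_divide)
  moreover have "\<mu>1 \<noteq> 1 \<or> \<mu>2 \<noteq> 1"
    using l0 not_real by (auto simp: \<mu>1_def \<mu>2_def Reals_cnj_iff)
  ultimately show ?thesis
    using bounded_if_affine_unimodular_shifts[of "E \<times> UNIV" "\<lambda>d x. \<phi> (d, x)"] by blast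
qed

end
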